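(* Let $G$ be a cograph with cotree $T$, and let $d$ be a non-negative integer with $d\le\chi(G)$. Set $h=\chi(G)-d$. Among all $h$-colourings of $G$ with the minimum possible number of monochromatic edges, there is one that satisfies Property 1. Property 1 requires the following for every 0-node $p$ of $T$ with children $q,r$: the colour classes within $T_q$ and within $T_r$ can each be ordered by non-increasing size so that, for every $i\in[\chi(T_p)]$, the $i$-th largest colour class of $T_q$ and the $i$-th largest colour class of $T_r$ have the same colour. Here an empty colour class is considered to have the same colour as every other class.
   Context: A cotree of a cograph $G$ is a rooted binary tree $T$ whose leaves correspond to the vertices of $G$ and whose interior nodes are labelled 0 or 1. To each node $p$ a cograph $T_p$ is associated: $T_p=K_1$ for a leaf; $T_p=T_q+T_r$ (disjoint union) if $p$ is a 0-node with children $q,r$; and $T_p=T_q\times T_r$ (join, i.e. all edges between $T_q$ and $T_r$ added) if $p$ is a 1-node with children $q,r$. The cograph associated with the root is $G$. Every cograph has a cotree. An $h$-colouring is any map $c:V(G)\to\{1,\dots,h\}$, not necessarily proper. An edge is monochromatic if both endpoints get the same colour. For a node $p$, the colour classes of $c$ in $T_p$ are the sets $c^{-1}(j)\cap V(T_p)$. *)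

theory Defs
  imports Main
begin

text \<open>Cotrees: leaves are vertices, interior nodes are 0-nodes (disjoint union)
  or 1-nodes (join).\<close>
datatype 'a cotree = Leaf 'a | Node0 "'a cotree" "'a cotree" | Node1 "'a cotree" "'a cotree"

fun verts :: "'a cotree \<Rightarrow> 'a set" where
  "verts (Leaf x) = {x}"
| "verts (Node0 q r) = verts q \<union> verts r"
| "verts (Node1 q r) = verts q \<union> verts r"

fun wf_cotree :: "'a cotree \<Rightarrow> bool" where
  "wf_cotree (Leaf x) = True"
| "wf_cotree (Node0 q r) = (wf_cotree q \<and> wf_cotree r \<and> verts q \<inter> verts r = {})"
| "wf_cotree (Node1 q r) = (wf_cotree q \<and> wf_cotree r \<and> verts q \<inter> verts r = {})"

fun adj :: "'a cotree \<Rightarrow> 'a \<Rightarrow> 'a \<Rightarrow> bool" where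
  "adj (Leaf x) u v = False"
| "adj (Node0 q r) u v = (adj q u v \<or> adj r u v)"
| "adj (Node1 q r) u v = (adj q u v \<or> adj r u v \<or>
      (u \<in> verts q \<and> v \<in> verts r) \<or> (u \<in> verts r \<and> v \<in> verts q))"

fun nodes :: "'a cotree \<Rightarrow> 'a cotree set" where
  "nodes (Leaf x) = {Leaf x}"
| "nodes (Node0 q r) = insert (Node0 q r) (nodes q \<union> nodes r)"
| "nodes (Node1 q r) = insert (Node1 q r) (nodes q \<union> nodes r)"

definition proper_colouring :: "'a cotree \<Rightarrow> nat \<Rightarrow> ('a \<Rightarrow> nat) \<Rightarrow> bool" where
  "proper_colouring T k c \<longleftrightarrow> (\<forall>v\<in>verts T. c v \<in> {1..k}) \<and> (\<forall>u v. adj T u v \<longrightarrow> c u \<noteq> c v)"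

definition chi :: "'a cotree \<Rightarrow> nat" where
  "chi T = (LEAST k. \<exists>c. proper_colouring T k c)"

definition h_colouring :: "'a cotree \<Rightarrow> nat \<Rightarrow> ('a \<Rightarrow> nat) \<Rightarrow> bool" where
  "h_colouring T h c \<longleftrightarrow> (\<forall>v\<in>verts T. c v \<in> {1..h})"

definition mono_edges :: "'a cotree \<Rightarrow> ('a \<Rightarrow> nat) \<Rightarrow> 'a set set" where
  "mono_edges T c = {{u, v} | u v. adj T u v \<and> c u = c v}"

definition optimal_h_colouring :: "'a cotree \<Rightarrow> nat \<Rightarrow> ('a \<Rightarrow> nat) \<Rightarrow> bool" where
  "optimal_h_colouring T h c \<longleftrightarrow> h_colouring T h c \<and>
     (\<forall>c'. h_colouring T h c' \<longrightarrow> card (mono_edges T c) \<le> card (mono_edges T c'))"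

definition colour_class :: "'a cotree \<Rightarrow> ('a \<Rightarrow> nat) \<Rightarrow> nat \<Rightarrow> 'a set" where
  "colour_class T c j = {v \<in> verts T. c v = j}"

text \<open>An ordering of the h colour classes of T_p by non-increasing size:
  sigma i is the colour of the i-th largest class.\<close>
definition class_ordering :: "'a cotree \<Rightarrow> nat \<Rightarrow> ('a \<Rightarrow> nat) \<Rightarrow> (nat \<Rightarrow> nat) \<Rightarrow> bool" where
  "class_ordering T h c \<sigma> \<longleftrightarrow> bij_betw \<sigma> {1..h} {1..h} \<and>
     (\<forall>i\<in>{1..h}. \<forall>j\<in>{1..h}. i \<le> j \<longrightarrow>
        card (colour_class T c (\<sigma> j)) \<le> card (colour_class T c (\<sigma> i)))"

definition property1 :: "'a cotree \<Rightarrow> nat \<Rightarrow> ('a \<Rightarrow> nat) \<Rightarrow> bool" where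
  "property1 T h c \<longleftrightarrow> (\<forall>q r. Node0 q r \<in> nodes T \<longrightarrow>
     (\<exists>\<sigma>q \<sigma>r. class_ordering q h c \<sigma>q \<and> class_ordering r h c \<sigma>r \<and>
        (\<forall>i\<in>{1..min (chi (Node0 q r)) h}.
           \<sigma>q i = \<sigma>r i \<or> colour_class q c (\<sigma>q i) = {} \<or> colour_class r c (\<sigma>r i) = {})))"

end

theory Submission
  imports Defs "HOL-Library.Multiset" "HOL-Library.Product_Lexorder" "HOL-Combinatorics.Transposition"
begin

text \<open>Every node x of the cotree is a module: each vertex outside T_x is adjacent to all of T_x
  or to none of it. Hence relabelling the colours inside T_x injectively changes the number of
  monochromatic edges only through the edges leaving T_x, namely by the sum over u in T_x of the
  number of external neighbours of x carrying the new colour of u. In an optimal colouring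
  this forces a colour with fewer external neighbours of x to have a class in T_x that is at
  least as large, since otherwise swapping the two colours inside T_x would be better.

  The two children q, r of a 0-node have the same external neighbours. Ordering the colours
  by (number of external neighbours, decreasing class size) therefore gives, in q and in r,
  orderings by non-increasing class size with the same sequence of weights, and relabelling
  the colours inside r so that the two orderings coincide keeps the colouring optimal.
  Repeating this bottom-up along the cotree, each relabelling confined to a subtree, yields
  Property 1 in the strong form where the two orderings agree at every position.\<close>

lemma finite_verts: "finite (verts T)"
  by (induction T) auto

lemma verts_nonempty: "verts T \<noteq> {}"
  by (induction T) auto

lemma adj_in_verts: "adj T u v \<Longrightarrow> u \<in> verts T \<and> v \<in> verts T"
  by (induction T) auto

lemma adj_sym: "adj T u v \<Longrightarrow> adj T v u"
  by (induction T) auto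

lemma nodes_refl: "T \<in> nodes T"
  by (cases T) auto

lemma nodes_trans: "x \<in> nodes T \<Longrightarrow> y \<in> nodes x \<Longrightarrow> y \<in> nodes T"
  by (induction T) auto

lemma nodes_verts_subset: "x \<in> nodes T \<Longrightarrow> verts x \<subseteq> verts T"
  by (induction T) auto

lemma wf_cotree_nodes: "wf_cotree T \<Longrightarrow> x \<in> nodes T \<Longrightarrow> wf_cotree x"
  by (induction T) auto

lemma adj_within_node_iff:
  "wf_cotree T \<Longrightarrow> x \<in> nodes T \<Longrightarrow> u \<in> verts x \<Longrightarrow> v \<in> verts x \<Longrightarrow> adj T u v \<longleftrightarrow> adj x u v"
proof (induction T)
  case (Node0 a b)
  then show ?case using nodes_verts_subset by (fastforce dest: adj_in_verts)
next
  case (Node1 a b)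
  then show ?case using nodes_verts_subset by (fastforce dest: adj_in_verts)
qed auto

lemma adj_module:
  "wf_cotree T \<Longrightarrow> x \<in> nodes T \<Longrightarrow> u \<in> verts x \<Longrightarrow> u' \<in> verts x \<Longrightarrow> v \<notin> verts x
   \<Longrightarrow> adj T u v \<longleftrightarrow> adj T u' v"
proof (induction T)
  case (Node0 a b)
  then show ?case using nodes_verts_subset by (fastforce dest: adj_in_verts)
next
  case (Node1 a b)
  then show ?case using nodes_verts_subset by (fastforce dest: adj_in_verts)
qed auto

definition ext_nbrs :: "'a cotree \<Rightarrow> 'a cotree \<Rightarrow> 'a set" where
  "ext_nbrs T x = {v \<in> verts T - verts x. \<forall>u\<in>verts x. adj T u v}"

lemma adj_across_iff:
  assumes "wf_cotree T" "x \<in> nodes T" "u \<in> verts x" "v \<notin> verts x"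
  shows "adj T u v \<longleftrightarrow> v \<in> ext_nbrs T x"
  using assms adj_module[OF assms(1,2)] unfolding ext_nbrs_def by (blast dest: adj_in_verts)

lemma ext_nbrs_Node0_child:
  assumes wf: "wf_cotree T" and p: "Node0 q r \<in> nodes T" and x: "x \<in> {q, r}"
  shows "ext_nbrs T x = ext_nbrs T (Node0 q r)"
proof
  have wfp: "wf_cotree (Node0 q r)" using wf_cotree_nodes[OF wf p] .
  show "ext_nbrs T x \<subseteq> ext_nbrs T (Node0 q r)"
  proof
    fix v assume v: "v \<in> ext_nbrs T x"
    obtain u where u: "u \<in> verts x" using verts_nonempty[of x] by blast
    have "adj T u v" "v \<notin> verts x" using u v unfolding ext_nbrs_def by auto
    moreover have "adj T u v \<longleftrightarrow> adj (Node0 q r) u v" if "v \<in> verts (Node0 q r)"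
      using adj_within_node_iff[OF wf p _ that] u x by auto
    ultimately have outside: "v \<notin> verts (Node0 q r)"
      using wfp u x by (auto dest: adj_in_verts)
    then show "v \<in> ext_nbrs T (Node0 q r)"
      using adj_across_iff[OF wf p _ outside] \<open>adj T u v\<close> u x by auto
  qed
  show "ext_nbrs T (Node0 q r) \<subseteq> ext_nbrs T x"
    using x unfolding ext_nbrs_def by auto
qed

definition mono_edges_between :: "'a cotree \<Rightarrow> ('a \<Rightarrow> nat) \<Rightarrow> 'a set \<Rightarrow> 'a set \<Rightarrow> 'a set set" where
  "mono_edges_between T c A B = {{u, v} | u v. adj T u v \<and> c u = c v \<and> u \<in> A \<and> v \<in> B}"

lemma mono_edges_betweenI:
  "adj T u v \<Longrightarrow> c u = c v \<Longrightarrow> u \<in> A \<Longrightarrow> v \<in> B \<Longrightarrow> {u, v} \<in> mono_edges_between T c A B"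
  unfolding mono_edges_between_def by blast

lemma finite_mono_edges: "finite (mono_edges T c)"
proof (rule finite_subset)
  show "mono_edges T c \<subseteq> Pow (verts T)"
    unfolding mono_edges_def by (auto dest: adj_in_verts)
qed (simp add: finite_verts)

lemma card_mono_edges_split:
  "card (mono_edges T c) = card (mono_edges_between T c A A) + card (mono_edges_between T c (- A) (- A))
     + card (mono_edges_between T c A (- A))"
proof -
  let ?I = "mono_edges_between T c A A" and ?O = "mono_edges_between T c (- A) (- A)"
    and ?X = "mono_edges_between T c A (- A)"
  have "mono_edges T c = ?I \<union> ?O \<union> ?X"
  proof
    show "mono_edges T c \<subseteq> ?I \<union> ?O \<union> ?X"
    proof
      fix E assume "E \<in> mono_edges T c"
      then obtain u v where E: "E = {u, v}" "adj T u v" "c u = c v"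
        unfolding mono_edges_def by blast
      then show "E \<in> ?I \<union> ?O \<union> ?X"
        using mono_edges_betweenI[of T u v c] mono_edges_betweenI[of T v u c] adj_sym[of T u v]
        by (cases "u \<in> A"; cases "v \<in> A") (auto simp: insert_commute)
    qed
    show "?I \<union> ?O \<union> ?X \<subseteq> mono_edges T c"
      unfolding mono_edges_def mono_edges_between_def by blast
  qed
  moreover have "finite ?I" "finite ?O" "finite ?X"
    using finite_mono_edges[of T c] calculation by (auto intro: finite_subset)
  moreover have "?I \<inter> ?O = {}"
    unfolding mono_edges_between_def by (auto simp: doubleton_eq_iff)
  moreover have "(?I \<union> ?O) \<inter> ?X = {}"
    unfolding mono_edges_between_def by (auto simp: doubleton_eq_iff)
  ultimately show ?thesis by (simp add: card_Un_disjoint)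
qed

lemma mono_edges_between_cong:
  "\<forall>u\<in>A. \<forall>v\<in>B. c' u = c' v \<longleftrightarrow> c u = c v \<Longrightarrow> mono_edges_between T c' A B = mono_edges_between T c A B"
  unfolding mono_edges_between_def by blast

lemma card_mono_edges_across:
  assumes wf: "wf_cotree T" and x: "x \<in> nodes T"
  shows "card (mono_edges_between T c (verts x) (- verts x))
           = (\<Sum>u\<in>verts x. card {v \<in> ext_nbrs T x. c v = c u})"
proof -
  let ?S = "SIGMA u:verts x. {v \<in> ext_nbrs T x. c v = c u}"
  have disj: "ext_nbrs T x \<inter> verts x = {}" unfolding ext_nbrs_def by auto
  have "mono_edges_between T c (verts x) (- verts x) = (\<lambda>(u, v). {u, v}) ` ?S"
  proof
    show "mono_edges_between T c (verts x) (- verts x) \<subseteq> (\<lambda>(u, v). {u, v}) ` ?S"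
      unfolding mono_edges_between_def using adj_across_iff[OF wf x] by force
    show "(\<lambda>(u, v). {u, v}) ` ?S \<subseteq> mono_edges_between T c (verts x) (- verts x)"
      using adj_across_iff[OF wf x] disj by (force intro: mono_edges_betweenI)
  qed
  moreover have "inj_on (\<lambda>(u, v). {u, v}) ?S"
    using disj by (auto simp: inj_on_def doubleton_eq_iff)
  moreover have "finite (ext_nbrs T x)"
    unfolding ext_nbrs_def using finite_verts[of T] by auto
  ultimately show ?thesis using finite_verts[of x] by (simp add: card_image card_SigmaI)
qed

definition recolour_on :: "'a set \<Rightarrow> (nat \<Rightarrow> nat) \<Rightarrow> ('a \<Rightarrow> nat) \<Rightarrow> 'a \<Rightarrow> nat" where
  "recolour_on A \<pi> c v = (if v \<in> A then \<pi> (c v) else c v)"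

definition ext_colour_count :: "'a cotree \<Rightarrow> 'a cotree \<Rightarrow> ('a \<Rightarrow> nat) \<Rightarrow> nat \<Rightarrow> nat" where
  "ext_colour_count T x c j = card {v \<in> ext_nbrs T x. c v = j}"

lemma card_mono_edges_recolour_on:
  assumes wf: "wf_cotree T" and x: "x \<in> nodes T" and inj: "inj_on \<pi> (c ` verts x)"
  defines "c' \<equiv> recolour_on (verts x) \<pi> c"
  shows "card (mono_edges T c') + (\<Sum>u\<in>verts x. ext_colour_count T x c (c u))
       = card (mono_edges T c) + (\<Sum>u\<in>verts x. ext_colour_count T x c (\<pi> (c u)))"
proof -
  have "mono_edges_between T c' (verts x) (verts x) = mono_edges_between T c (verts x) (verts x)"
    using inj by (intro mono_edges_between_cong) (auto simp: c'_def recolour_on_def inj_on_eq_iff)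
  moreover have "mono_edges_between T c' (- verts x) (- verts x) = mono_edges_between T c (- verts x) (- verts x)"
    by (intro mono_edges_between_cong) (simp add: c'_def recolour_on_def)
  moreover have "{v \<in> ext_nbrs T x. c' v = c' u} = {v \<in> ext_nbrs T x. c v = \<pi> (c u)}" if "u \<in> verts x" for u
    using that unfolding c'_def recolour_on_def ext_nbrs_def by auto
  then have "card (mono_edges_between T c' (verts x) (- verts x))
      = (\<Sum>u\<in>verts x. ext_colour_count T x c (\<pi> (c u)))"
    unfolding card_mono_edges_across[OF wf x] ext_colour_count_def by (simp cong: sum.cong)
  moreover have "card (mono_edges_between T c (verts x) (- verts x))
      = (\<Sum>u\<in>verts x. ext_colour_count T x c (c u))"
    unfolding card_mono_edges_across[OF wf x] ext_colour_count_def ..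
  ultimately show ?thesis
    using card_mono_edges_split[of T c' "verts x"] card_mono_edges_split[of T c "verts x"] by simp
qed

lemma h_colouring_recolour_on:
  "h_colouring T h c \<Longrightarrow> \<pi> ` {1..h} \<subseteq> {1..h} \<Longrightarrow> h_colouring T h (recolour_on A \<pi> c)"
  unfolding h_colouring_def recolour_on_def by (simp add: image_subset_iff)

lemma optimal_h_colouring_range:
  "optimal_h_colouring T h c \<Longrightarrow> x \<in> nodes T \<Longrightarrow> \<forall>v\<in>verts x. c v \<in> {1..h}"
  using nodes_verts_subset unfolding optimal_h_colouring_def h_colouring_def by blast

lemma optimal_h_colouring_recolour_on_le:
  assumes wf: "wf_cotree T" and x: "x \<in> nodes T" and opt: "optimal_h_colouring T h c"
    and inj: "inj_on \<pi> (c ` verts x)" and into: "\<pi> ` {1..h} \<subseteq> {1..h}"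
  shows "(\<Sum>u\<in>verts x. ext_colour_count T x c (c u)) \<le> (\<Sum>u\<in>verts x. ext_colour_count T x c (\<pi> (c u)))"
proof -
  have "h_colouring T h (recolour_on (verts x) \<pi> c)"
    using opt into h_colouring_recolour_on unfolding optimal_h_colouring_def by blast
  then have "card (mono_edges T c) \<le> card (mono_edges T (recolour_on (verts x) \<pi> c))"
    using opt unfolding optimal_h_colouring_def by blast
  then show ?thesis using card_mono_edges_recolour_on[OF wf x inj] by linarith
qed

lemma optimal_h_colouring_recolour_on:
  assumes wf: "wf_cotree T" and x: "x \<in> nodes T" and opt: "optimal_h_colouring T h c"
    and inj: "inj_on \<pi> (c ` verts x)" and into: "\<pi> ` {1..h} \<subseteq> {1..h}"
    and same: "\<forall>j\<in>{1..h}. ext_colour_count T x c (\<pi> j) = ext_colour_count T x c j"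
  shows "optimal_h_colouring T h (recolour_on (verts x) \<pi> c)"
proof -
  from optimal_h_colouring_range[OF opt x] have "(\<Sum>u\<in>verts x. ext_colour_count T x c (\<pi> (c u))) = (\<Sum>u\<in>verts x. ext_colour_count T x c (c u))"
    using same by simp
  then have "card (mono_edges T (recolour_on (verts x) \<pi> c)) = card (mono_edges T c)"
    using card_mono_edges_recolour_on[OF wf x inj] by simp
  then show ?thesis
    using opt into h_colouring_recolour_on unfolding optimal_h_colouring_def by metis
qed

lemma sum_split_two_values:
  fixes g :: "nat \<Rightarrow> nat"
  assumes "finite X" "a \<noteq> b"
  shows "(\<Sum>u\<in>X. g (f u)) = card {u\<in>X. f u = a} * g a + card {u\<in>X. f u = b} * g b
           + (\<Sum>u\<in>{u\<in>X. f u \<notin> {a, b}}. g (f u))"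
proof -
  let ?A = "{u\<in>X. f u = a}" and ?B = "{u\<in>X. f u = b}" and ?R = "{u\<in>X. f u \<notin> {a, b}}"
  have "(\<Sum>u\<in>X. g (f u)) = (\<Sum>u\<in>?A \<union> (?B \<union> ?R). g (f u))"
    by (rule sum.cong) auto
  also have "\<dots> = (\<Sum>u\<in>?A. g (f u)) + (\<Sum>u\<in>?B \<union> ?R. g (f u))"
    by (rule sum.union_disjoint) (use assms in auto)
  also have "(\<Sum>u\<in>?B \<union> ?R. g (f u)) = (\<Sum>u\<in>?B. g (f u)) + (\<Sum>u\<in>?R. g (f u))"
    by (rule sum.union_disjoint) (use assms in auto)
  also have "(\<Sum>u\<in>?A. g (f u)) = card ?A * g a" by simp
  also have "(\<Sum>u\<in>?B. g (f u)) = card ?B * g b" by simp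
  finally show ?thesis by simp
qed

lemma rearrangement_strict:
  fixes m n v w :: nat
  assumes "m < n" "v < w"
  shows "m * w + n * v < m * v + n * w"
proof -
  obtain s t where "n = m + s" "w = v + t" "s > 0" "t > 0"
    using assms less_imp_add_positive by metis
  then show ?thesis by (simp add: algebra_simps)
qed

lemma optimal_h_colouring_class_card_antimono:
  assumes wf: "wf_cotree T" and x: "x \<in> nodes T" and opt: "optimal_h_colouring T h c"
    and a: "a \<in> {1..h}" and b: "b \<in> {1..h}"
    and less: "ext_colour_count T x c a < ext_colour_count T x c b"
  shows "card (colour_class x c b) \<le> card (colour_class x c a)"
proof (rule ccontr)
  define W where "W = ext_colour_count T x c"
  define n where "n j = card {u\<in>verts x. c u = j}" for j
  define R where "R = (\<Sum>u\<in>{u\<in>verts x. c u \<notin> {a, b}}. W (c u))"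
  let ?\<tau> = "Transposition.transpose a b"
  assume "\<not> ?thesis"
  then have "n a < n b" unfolding n_def colour_class_def by simp
  have ab: "a \<noteq> b" using less by auto
  have "(\<Sum>u\<in>verts x. W (c u)) \<le> (\<Sum>u\<in>verts x. W (?\<tau> (c u)))"
    unfolding W_def using a b
    by (intro optimal_h_colouring_recolour_on_le[OF wf x opt]) simp_all
  moreover have "(\<Sum>u\<in>verts x. W (c u)) = n a * W a + n b * W b + R"
    unfolding n_def R_def by (rule sum_split_two_values[OF finite_verts ab])
  moreover have "(\<Sum>u\<in>verts x. W (?\<tau> (c u))) = n a * W b + n b * W a + R"
  proof -
    have "{u\<in>verts x. ?\<tau> (c u) = a} = {u\<in>verts x. c u = b}"
      "{u\<in>verts x. ?\<tau> (c u) = b} = {u\<in>verts x. c u = a}"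
      "{u\<in>verts x. ?\<tau> (c u) \<notin> {a, b}} = {u\<in>verts x. c u \<notin> {a, b}}"
      by (auto simp: transpose_eq_iff)
    moreover have "(\<Sum>u\<in>{u\<in>verts x. c u \<notin> {a, b}}. W (?\<tau> (c u))) = R"
      unfolding R_def by (rule sum.cong) auto
    ultimately show ?thesis
      using sum_split_two_values[OF finite_verts ab, where f = "\<lambda>u. ?\<tau> (c u)" and g = W]
      unfolding n_def by simp
  qed
  ultimately show False
    using rearrangement_strict[OF \<open>n a < n b\<close> less[folded W_def]] by linarith
qed

lemma sort_by_weight_then_count:
  fixes W :: "'a \<Rightarrow> 'b::linorder" and n :: "'a \<Rightarrow> nat"
  assumes antimono: "\<forall>a\<in>set xs. \<forall>b\<in>set xs. W a < W b \<longrightarrow> n b \<le> n a"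
  defines "L \<equiv> sort_key (\<lambda>j. (W j, - int (n j))) xs"
  shows "sorted (map W L)" "\<forall>i j. i \<le> j \<longrightarrow> j < length L \<longrightarrow> n (L ! j) \<le> n (L ! i)"
proof -
  have key: "(W (L ! i), - int (n (L ! i))) \<le> (W (L ! j), - int (n (L ! j)))"
    if "i \<le> j" "j < length L" for i j
    using sorted_sort_key[of "\<lambda>j. (W j, - int (n j))" xs] that
    unfolding L_def sorted_iff_nth_mono by simp
  show "sorted (map W L)"
    unfolding sorted_iff_nth_mono using key by fastforce
  show "\<forall>i j. i \<le> j \<longrightarrow> j < length L \<longrightarrow> n (L ! j) \<le> n (L ! i)"
  proof (intro allI impI)
    fix i j assume ij: "i \<le> j" "j < length L"
    then have "L ! i \<in> set L" "L ! j \<in> set L" by auto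
    then have "L ! i \<in> set xs" "L ! j \<in> set xs" by (simp_all add: L_def)
    then show "n (L ! j) \<le> n (L ! i)" using key[OF ij] antimono by auto
  qed
qed

lemma sorted_map_eq_if_same_set:
  assumes "distinct xs" "distinct ys" "set xs = set ys" "sorted (map W xs)" "sorted (map W ys)"
  shows "map W xs = map W ys"
proof -
  have "mset (map W xs) = mset (map W ys)"
    using assms(1-3) set_eq_iff_mset_eq_distinct by (metis mset_map)
  from properties_for_sort[OF this assms(4)] show ?thesis
    using sorted_sort_id[OF assms(5)] by simp
qed

lemma bij_betw_matching_lists:
  assumes "distinct xs" "distinct ys" "set xs = S" "set ys = S"
  obtains \<pi> where "bij_betw \<pi> S S" "\<forall>k < length ys. \<pi> (ys ! k) = xs ! k"
proof -
  define \<pi> where "\<pi> = (!) xs \<circ> inv_into {..<length ys} ((!) ys)"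
  have len: "length xs = length ys"
    using assms distinct_card by metis
  have bij_xs: "bij_betw ((!) xs) {..<length ys} S" and bij_ys: "bij_betw ((!) ys) {..<length ys} S"
    using assms len by (auto intro: bij_betw_nth)
  have "bij_betw \<pi> S S"
    unfolding \<pi>_def using bij_betw_trans[OF bij_betw_inv_into[OF bij_ys] bij_xs] .
  moreover have "\<forall>k < length ys. \<pi> (ys ! k) = xs ! k"
    unfolding \<pi>_def using inv_into_f_f[OF bij_betw_imp_inj_on[OF bij_ys]] by simp
  ultimately show thesis using that by blast
qed

lemma matching_preserves_weight:
  assumes "\<forall>k < length ys. \<pi> (ys ! k) = xs ! k" "map W xs = map W ys" "j \<in> set ys"
  shows "W (\<pi> j) = W j"
proof -
  obtain k where k: "k < length ys" "j = ys ! k"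
    using assms(3) by (metis in_set_conv_nth)
  have "length xs = length ys" using map_eq_imp_length_eq[OF assms(2)] .
  then have "W (\<pi> j) = map W xs ! k" using assms(1) k by simp
  also have "\<dots> = W j" using assms(2) k by simp
  finally show ?thesis .
qed

lemma class_ordering_of_list:
  assumes "distinct L" "set L = {1..h}"
    and "\<forall>i j. i \<le> j \<longrightarrow> j < length L \<longrightarrow> card (colour_class y c (L ! j)) \<le> card (colour_class y c (L ! i))"
  shows "class_ordering y h c (\<lambda>i. L ! (i - 1))"
proof -
  have len: "length L = h" using assms distinct_card by fastforce
  have "bij_betw (\<lambda>i. i - 1) {1..h} {..<h}"
    by (rule bij_betw_byWitness[where f' = Suc]) auto
  moreover have "bij_betw ((!) L) {..<h} {1..h}"
    using assms len by (auto intro: bij_betw_nth)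
  ultimately have "bij_betw (\<lambda>i. L ! (i - 1)) {1..h} {1..h}"
    using bij_betw_trans by (fastforce simp: comp_def)
  then show ?thesis
    using assms(3) len unfolding class_ordering_def by auto
qed

lemma colour_class_cong: "\<forall>v\<in>verts y. c v = c' v \<Longrightarrow> colour_class y c = colour_class y c'"
  unfolding colour_class_def by auto

lemma class_ordering_cong: "\<forall>v\<in>verts y. c v = c' v \<Longrightarrow> class_ordering y h c = class_ordering y h c'"
  unfolding class_ordering_def by (simp add: colour_class_cong[of y c c'])

lemma colour_class_comp:
  assumes "inj_on \<pi> {1..h}" "\<forall>v\<in>verts y. c v \<in> {1..h}" "j \<in> {1..h}"
  shows "colour_class y (\<pi> \<circ> c) (\<pi> j) = colour_class y c j"
  using assms unfolding colour_class_def by (auto simp: inj_on_eq_iff)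

lemma class_ordering_comp:
  assumes \<pi>: "bij_betw \<pi> {1..h} {1..h}" and c: "\<forall>v\<in>verts y. c v \<in> {1..h}"
    and \<sigma>: "class_ordering y h c \<sigma>"
  shows "class_ordering y h (\<pi> \<circ> c) (\<pi> \<circ> \<sigma>)"
proof -
  have \<sigma>_bij: "bij_betw \<sigma> {1..h} {1..h}" using \<sigma> unfolding class_ordering_def by blast
  have "colour_class y (\<pi> \<circ> c) ((\<pi> \<circ> \<sigma>) i) = colour_class y c (\<sigma> i)" if "i \<in> {1..h}" for i
    using colour_class_comp[OF bij_betw_imp_inj_on[OF \<pi>] c] bij_betw_apply[OF \<sigma>_bij that] by simp
  then show ?thesis
    using \<sigma> bij_betw_trans[OF \<sigma>_bij \<pi>] unfolding class_ordering_def by simp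
qed

lemma property1_cong:
  assumes agree: "\<forall>v\<in>verts x. c v = c' v" and p: "property1 x h c"
  shows "property1 x h c'"
  unfolding property1_def
proof (intro allI impI)
  fix q r assume qr: "Node0 q r \<in> nodes x"
  have "\<forall>v\<in>verts q. c v = c' v" "\<forall>v\<in>verts r. c v = c' v"
    using agree nodes_verts_subset[OF qr] by auto
  note cong = colour_class_cong[OF this(1)] colour_class_cong[OF this(2)]
    class_ordering_cong[OF this(1)] class_ordering_cong[OF this(2)]
  obtain \<sigma>q \<sigma>r where "class_ordering q h c \<sigma>q" "class_ordering r h c \<sigma>r"
    "\<forall>i\<in>{1..min (chi (Node0 q r)) h}.
       \<sigma>q i = \<sigma>r i \<or> colour_class q c (\<sigma>q i) = {} \<or> colour_class r c (\<sigma>r i) = {}"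
    using p qr unfolding property1_def by blast
  then show "\<exists>\<sigma>q \<sigma>r. class_ordering q h c' \<sigma>q \<and> class_ordering r h c' \<sigma>r \<and>
      (\<forall>i\<in>{1..min (chi (Node0 q r)) h}.
         \<sigma>q i = \<sigma>r i \<or> colour_class q c' (\<sigma>q i) = {} \<or> colour_class r c' (\<sigma>r i) = {})"
    unfolding cong by blast
qed

lemma property1_comp:
  assumes \<pi>: "bij_betw \<pi> {1..h} {1..h}" and c: "\<forall>v\<in>verts x. c v \<in> {1..h}" and p: "property1 x h c"
  shows "property1 x h (\<pi> \<circ> c)"
  unfolding property1_def
proof (intro allI impI)
  fix q r assume qr: "Node0 q r \<in> nodes x"
  have cq: "\<forall>v\<in>verts q. c v \<in> {1..h}" and cr: "\<forall>v\<in>verts r. c v \<in> {1..h}"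
    using c nodes_verts_subset[OF qr] by auto
  obtain \<sigma>q \<sigma>r where \<sigma>: "class_ordering q h c \<sigma>q" "class_ordering r h c \<sigma>r"
    and agree: "\<forall>i\<in>{1..min (chi (Node0 q r)) h}.
       \<sigma>q i = \<sigma>r i \<or> colour_class q c (\<sigma>q i) = {} \<or> colour_class r c (\<sigma>r i) = {}"
    using p qr unfolding property1_def by blast
  have "\<sigma>q i \<in> {1..h}" "\<sigma>r i \<in> {1..h}" if "i \<in> {1..h}" for i
    using \<sigma> that bij_betw_apply unfolding class_ordering_def by fast+
  then have "\<forall>i\<in>{1..min (chi (Node0 q r)) h}.
       (\<pi> \<circ> \<sigma>q) i = (\<pi> \<circ> \<sigma>r) i \<or> colour_class q (\<pi> \<circ> c) ((\<pi> \<circ> \<sigma>q) i) = {}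
       \<or> colour_class r (\<pi> \<circ> c) ((\<pi> \<circ> \<sigma>r) i) = {}"
    using agree colour_class_comp[OF bij_betw_imp_inj_on[OF \<pi>] cq]
      colour_class_comp[OF bij_betw_imp_inj_on[OF \<pi>] cr] by auto
  then show "\<exists>\<sigma>q \<sigma>r. class_ordering q h (\<pi> \<circ> c) \<sigma>q \<and> class_ordering r h (\<pi> \<circ> c) \<sigma>r \<and>
      (\<forall>i\<in>{1..min (chi (Node0 q r)) h}.
         \<sigma>q i = \<sigma>r i \<or> colour_class q (\<pi> \<circ> c) (\<sigma>q i) = {} \<or> colour_class r (\<pi> \<circ> c) (\<sigma>r i) = {})"
    using class_ordering_comp[OF \<pi> cq \<sigma>(1)] class_ordering_comp[OF \<pi> cr \<sigma>(2)] by blast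
qed

lemma property1_Leaf: "property1 (Leaf v) h c"
  unfolding property1_def by simp

lemma property1_Node1: "property1 q h c \<Longrightarrow> property1 r h c \<Longrightarrow> property1 (Node1 q r) h c"
  unfolding property1_def by auto

lemma property1_Node0:
  "property1 q h c \<Longrightarrow> property1 r h c \<Longrightarrow> class_ordering q h c \<sigma> \<Longrightarrow> class_ordering r h c \<sigma>
   \<Longrightarrow> property1 (Node0 q r) h c"
  unfolding property1_def by auto

lemma optimal_h_colouring_sorted_colours:
  assumes wf: "wf_cotree T" and x: "x \<in> nodes T" and opt: "optimal_h_colouring T h c"
  obtains L where "distinct L" "set L = {1..h}" "sorted (map (ext_colour_count T x c) L)"
    "\<forall>i j. i \<le> j \<longrightarrow> j < length L \<longrightarrow> card (colour_class x c (L ! j)) \<le> card (colour_class x c (L ! i))"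
proof
  let ?L = "sort_key (\<lambda>j. (ext_colour_count T x c j, - int (card (colour_class x c j)))) [1..<Suc h]"
  show "distinct ?L" "set ?L = {1..h}" by auto
  have "\<forall>a\<in>set [1..<Suc h]. \<forall>b\<in>set [1..<Suc h].
      ext_colour_count T x c a < ext_colour_count T x c b \<longrightarrow> card (colour_class x c b) \<le> card (colour_class x c a)"
    using optimal_h_colouring_class_card_antimono[OF wf x opt] by auto
  from sort_by_weight_then_count[OF this]
  show "sorted (map (ext_colour_count T x c) ?L)"
    "\<forall>i j. i \<le> j \<longrightarrow> j < length ?L \<longrightarrow> card (colour_class x c (?L ! j)) \<le> card (colour_class x c (?L ! i))"
    by blast+
qed

lemma optimal_h_colouring_Node0_common_ordering:
  assumes wf: "wf_cotree T" and p: "Node0 q r \<in> nodes T" and opt: "optimal_h_colouring T h c"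
  obtains \<pi> \<sigma> where "bij_betw \<pi> {1..h} {1..h}" "optimal_h_colouring T h (recolour_on (verts r) \<pi> c)"
    "class_ordering q h c \<sigma>" "class_ordering r h (\<pi> \<circ> c) \<sigma>"
proof -
  have q: "q \<in> nodes T" and r: "r \<in> nodes T"
    using nodes_trans[OF p] nodes_refl by auto
  have cr: "\<forall>v\<in>verts r. c v \<in> {1..h}" using optimal_h_colouring_range[OF opt r] .
  define W where "W = ext_colour_count T q c"
  have Wr: "ext_colour_count T r c = W"
    unfolding W_def ext_colour_count_def using ext_nbrs_Node0_child[OF wf p] by simp
  obtain Lq where Lq: "distinct Lq" "set Lq = {1..h}" "sorted (map W Lq)"
    "\<forall>i j. i \<le> j \<longrightarrow> j < length Lq \<longrightarrow> card (colour_class q c (Lq ! j)) \<le> card (colour_class q c (Lq ! i))"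
    using optimal_h_colouring_sorted_colours[OF wf q opt] unfolding W_def by blast
  obtain Lr where Lr: "distinct Lr" "set Lr = {1..h}" "sorted (map W Lr)"
    "\<forall>i j. i \<le> j \<longrightarrow> j < length Lr \<longrightarrow> card (colour_class r c (Lr ! j)) \<le> card (colour_class r c (Lr ! i))"
    using optimal_h_colouring_sorted_colours[OF wf r opt] unfolding Wr by blast
  have len: "length Lq = h" "length Lr = h"
    using Lq(1,2) Lr(1,2) distinct_card by fastforce+
  have same_weights: "map W Lq = map W Lr"
    using sorted_map_eq_if_same_set[OF Lq(1) Lr(1)] Lq(2,3) Lr(2,3) by simp
  obtain \<pi> where \<pi>: "bij_betw \<pi> {1..h} {1..h}" and \<pi>_nth: "\<forall>k < h. \<pi> (Lr ! k) = Lq ! k"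
    by (rule bij_betw_matching_lists[OF Lq(1) Lr(1) Lq(2) Lr(2)]) (use len in auto)
  have "\<forall>j\<in>{1..h}. W (\<pi> j) = W j"
    using matching_preserves_weight[of Lr \<pi> Lq W] \<pi>_nth same_weights len Lr(2) by simp
  then have "optimal_h_colouring T h (recolour_on (verts r) \<pi> c)"
    using bij_betw_imp_inj_on[OF \<pi>] cr \<pi> Wr
    by (intro optimal_h_colouring_recolour_on[OF wf r opt])
      (auto simp: bij_betw_def intro: inj_on_subset)
  moreover have "class_ordering q h c (\<lambda>i. Lq ! (i - 1))"
    using class_ordering_of_list[OF Lq(1,2,4)] .
  moreover have "class_ordering r h (\<pi> \<circ> c) (\<lambda>i. Lq ! (i - 1))"
  proof (rule class_ordering_of_list[OF Lq(1,2)])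
    have "colour_class r (\<pi> \<circ> c) (Lq ! k) = colour_class r c (Lr ! k)" if "k < h" for k
      using colour_class_comp[OF bij_betw_imp_inj_on[OF \<pi>] cr, of "Lr ! k"] \<pi>_nth that Lr len
      by (metis nth_mem)
    then show "\<forall>i j. i \<le> j \<longrightarrow> j < length Lq \<longrightarrow>
        card (colour_class r (\<pi> \<circ> c) (Lq ! j)) \<le> card (colour_class r (\<pi> \<circ> c) (Lq ! i))"
      using Lr(4) len by auto
  qed
  ultimately show thesis using that \<pi> by blast
qed

lemma optimal_h_colouring_property1_Node0:
  assumes wf: "wf_cotree T" and p: "Node0 q r \<in> nodes T" and opt: "optimal_h_colouring T h c"
    and pq: "property1 q h c" and pr: "property1 r h c"
  obtains c' where "optimal_h_colouring T h c'" "\<forall>v. v \<notin> verts r \<longrightarrow> c' v = c v"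
    "property1 (Node0 q r) h c'"
proof -
  obtain \<pi> \<sigma> where \<pi>: "bij_betw \<pi> {1..h} {1..h}"
    and opt': "optimal_h_colouring T h (recolour_on (verts r) \<pi> c)"
    and \<sigma>: "class_ordering q h c \<sigma>" "class_ordering r h (\<pi> \<circ> c) \<sigma>"
    using optimal_h_colouring_Node0_common_ordering[OF wf p opt] by blast
  let ?c' = "recolour_on (verts r) \<pi> c"
  have "verts q \<inter> verts r = {}" using wf_cotree_nodes[OF wf p] by simp
  then have on_q: "\<forall>v\<in>verts q. c v = ?c' v" by (auto simp: recolour_on_def)
  have on_r: "\<forall>v\<in>verts r. (\<pi> \<circ> c) v = ?c' v" by (simp add: recolour_on_def)
  have "r \<in> nodes T" using nodes_trans[OF p] by (simp add: nodes_refl)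
  with opt have c_r: "\<forall>v\<in>verts r. c v \<in> {1..h}" by (rule optimal_h_colouring_range)
  have "property1 q h ?c'" using property1_cong[OF on_q pq] .
  moreover have "property1 r h ?c'" using property1_cong[OF on_r property1_comp[OF \<pi> c_r pr]] .
  moreover have "class_ordering q h ?c' \<sigma>" "class_ordering r h ?c' \<sigma>"
    using \<sigma> class_ordering_cong[OF on_q] class_ordering_cong[OF on_r] by simp_all
  ultimately have "property1 (Node0 q r) h ?c'" by (rule property1_Node0)
  moreover have "\<forall>v. v \<notin> verts r \<longrightarrow> ?c' v = c v" by (simp add: recolour_on_def)
  ultimately show thesis using that opt' by blast
qed

lemma optimal_h_colouring_property1_on_node:
  assumes wf: "wf_cotree T"
  shows "x \<in> nodes T \<Longrightarrow> optimal_h_colouring T h c \<Longrightarrow>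
    \<exists>c'. optimal_h_colouring T h c' \<and> (\<forall>v. v \<notin> verts x \<longrightarrow> c' v = c v) \<and> property1 x h c'"
proof (induction x arbitrary: c)
  case (Leaf v)
  then show ?case using property1_Leaf by (intro exI[of _ c]) simp
next
  case (Node1 q r)
  have q: "q \<in> nodes T" and r: "r \<in> nodes T"
    using nodes_trans[OF Node1.prems(1)] by (simp_all add: nodes_refl)
  obtain c1 where c1: "optimal_h_colouring T h c1" "\<forall>v. v \<notin> verts q \<longrightarrow> c1 v = c v" "property1 q h c1"
    using Node1.IH(1)[OF q Node1.prems(2)] by blast
  obtain c2 where c2: "optimal_h_colouring T h c2" "\<forall>v. v \<notin> verts r \<longrightarrow> c2 v = c1 v" "property1 r h c2"
    using Node1.IH(2)[OF r c1(1)] by blast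
  have "verts q \<inter> verts r = {}" using wf_cotree_nodes[OF wf Node1.prems(1)] by simp
  then have "\<forall>v\<in>verts q. c1 v = c2 v" using c2(2) by auto
  then have "property1 q h c2" using property1_cong c1(3) by blast
  moreover have "\<forall>v. v \<notin> verts (Node1 q r) \<longrightarrow> c2 v = c v" using c1(2) c2(2) by simp
  ultimately show ?case using c2(1,3) property1_Node1 by blast
next
  case (Node0 q r)
  have q: "q \<in> nodes T" and r: "r \<in> nodes T"
    using nodes_trans[OF Node0.prems(1)] by (simp_all add: nodes_refl)
  obtain c1 where c1: "optimal_h_colouring T h c1" "\<forall>v. v \<notin> verts q \<longrightarrow> c1 v = c v" "property1 q h c1"
    using Node0.IH(1)[OF q Node0.prems(2)] by blast
  obtain c2 where c2: "optimal_h_colouring T h c2" "\<forall>v. v \<notin> verts r \<longrightarrow> c2 v = c1 v" "property1 r h c2"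
    using Node0.IH(2)[OF r c1(1)] by blast
  have "verts q \<inter> verts r = {}" using wf_cotree_nodes[OF wf Node0.prems(1)] by simp
  then have "\<forall>v\<in>verts q. c1 v = c2 v" using c2(2) by auto
  then have "property1 q h c2" using property1_cong c1(3) by blast
  then obtain c3 where c3: "optimal_h_colouring T h c3" "\<forall>v. v \<notin> verts r \<longrightarrow> c3 v = c2 v"
    "property1 (Node0 q r) h c3"
    using optimal_h_colouring_property1_Node0[OF wf Node0.prems(1) c2(1) _ c2(3)] by blast
  moreover have "\<forall>v. v \<notin> verts (Node0 q r) \<longrightarrow> c3 v = c v" using c1(2) c2(2) c3(2) by simp
  ultimately show ?case by blast
qed

lemma optimal_h_colouring_exists: "h_colouring T h c \<Longrightarrow> \<exists>c. optimal_h_colouring T h c"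
  unfolding optimal_h_colouring_def by (rule ex_has_least_nat)

theorem mainTheorem12:
  fixes T :: "'a cotree" and d h :: nat
  assumes "wf_cotree T"
    and "d \<le> chi T"
    and "h = chi T - d"
    and "\<exists>c. h_colouring T h c"
  shows "\<exists>c. optimal_h_colouring T h c \<and> property1 T h c"
  using optimal_h_colouring_property1_on_node[OF assms(1) nodes_refl] optimal_h_colouring_exists assms(4)
  by blast

end
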